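(* For every $n\ge 8$, the Pachner graph $\mathcal{S}_n$ of $n$-vertex stacked $2$-spheres is disconnected.
   Context: A triangulated $2$-sphere is a finite simplicial complex whose geometric realization is homeomorphic to the $2$-sphere. Edge flip $ab\mapsto cd$: if $abc,abd$ are triangles and $cd$ is not an edge, replace $abc,abd$ by $acd,bcd$. A stacked $3$-ball is a simplicial complex obtained from a single tetrahedron by repeatedly gluing a new tetrahedron along exactly one boundary triangle, introducing one new vertex each time. A stacked $2$-sphere is a triangulated $2$-sphere isomorphic to the boundary of a stacked $3$-ball. $\mathcal{S}_n$ is the graph whose nodes are the isomorphism classes of $n$-vertex stacked $2$-spheres, two nodes being adjacent iff a representative of one can be transformed into a representative of the other by a single edge flip. *)

theory Defs
  imports Main
begin

text \<open>Pure simplicial complexes are represented by their sets of facets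
(vertex type nat). A 3-ball is given by its set of tetrahedra (4-sets), a
2-sphere by its set of triangles (3-sets).\<close>

definition boundary_complex :: "nat set set \<Rightarrow> nat set set" where
  "boundary_complex B = {t. card t = 3 \<and> (\<exists>!T. T \<in> B \<and> t \<subseteq> T)}"

inductive stacked_ball :: "nat set set \<Rightarrow> bool" where
  single: "card T = 4 \<Longrightarrow> stacked_ball {T}"
| glue: "\<lbrakk> stacked_ball B; t \<in> boundary_complex B; v \<notin> \<Union>B \<rbrakk>
          \<Longrightarrow> stacked_ball (insert (insert v t) B)"

definition complex_iso :: "nat set set \<Rightarrow> nat set set \<Rightarrow> bool" where
  "complex_iso K L \<longleftrightarrow> (\<exists>f. bij_betw f (\<Union>K) (\<Union>L) \<and> (\<lambda>s. f ` s) ` K = L)"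

definition stacked_sphere :: "nat set set \<Rightarrow> bool" where
  "stacked_sphere S \<longleftrightarrow> (\<exists>B. stacked_ball B \<and> complex_iso S (boundary_complex B))"

definition edge_flip :: "nat set set \<Rightarrow> nat set set \<Rightarrow> bool" where
  "edge_flip K L \<longleftrightarrow> (\<exists>a b c d. distinct [a, b, c, d] \<and>
      {a, b, c} \<in> K \<and> {a, b, d} \<in> K \<and> \<not> (\<exists>s\<in>K. {c, d} \<subseteq> s) \<and>
      L = (K - {{a, b, c}, {a, b, d}}) \<union> {{a, c, d}, {b, c, d}})"

definition num_vertices :: "nat set set \<Rightarrow> nat" where
  "num_vertices K = card (\<Union>K)"

text \<open>Adjacency in the Pachner graph S_n, lifted to representatives:
a representative of the class of K flips to a representative of the class of L.\<close>
definition pachner_adj :: "nat \<Rightarrow> nat set set \<Rightarrow> nat set set \<Rightarrow> bool" where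
  "pachner_adj n K L \<longleftrightarrow>
     stacked_sphere K \<and> num_vertices K = n \<and> stacked_sphere L \<and> num_vertices L = n \<and>
     (\<exists>K' L'. complex_iso K K' \<and> complex_iso L L' \<and> edge_flip K' L')"

definition pachner_graph_connected :: "nat \<Rightarrow> bool" where
  "pachner_graph_connected n \<longleftrightarrow>
     (\<forall>K L. stacked_sphere K \<and> num_vertices K = n \<and> stacked_sphere L \<and> num_vertices L = n
        \<longrightarrow> (symclp (pachner_adj n))\<^sup>*\<^sup>* K L)"

end

theory Submission
  imports Defs
begin

(* Call a set of four vertices of a 2-sphere a faceless K4 if they are pairwise adjacent but span
   no triangle of the sphere. The edge graph of a stacked sphere is that of its stacked ball, so it
   contains no K5 and every 4-cycle in it has a chord; moreover every edge lies in at most two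
   triangles. These properties make the existence of a faceless K4 invariant under an edge flip
   ab -> cd between stacked spheres: a faceless K4 avoiding the edge ab survives the flip, and one
   containing a, b and two further vertices y, z cannot exist, because the chorded 4-cycles a-c-b-y
   and a-c-b-z after the flip force c to be adjacent to y and z, so that {a,b,c,y,z} would be a K5.
   Hence the invariant is constant on connected components of S_n. The boundary of the stacked path
   ball with tetrahedra {i,...,i+3} has no faceless K4, whereas for n >= 8 a stacked ball with an
   interior tetrahedron yields a boundary on which that tetrahedron is a faceless K4. *)

section \<open>Edge graphs of pure complexes\<close>

definition adjacent :: "nat set set \<Rightarrow> nat \<Rightarrow> nat \<Rightarrow> bool" where
  "adjacent X x y \<longleftrightarrow> x \<noteq> y \<and> (\<exists>s\<in>X. x \<in> s \<and> y \<in> s)"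

definition is_clique :: "nat set set \<Rightarrow> nat set \<Rightarrow> bool" where
  "is_clique X W \<longleftrightarrow> (\<forall>x\<in>W. \<forall>y\<in>W. x \<noteq> y \<longrightarrow> adjacent X x y)"

definition K5_free :: "nat set set \<Rightarrow> bool" where
  "K5_free X \<longleftrightarrow> (\<forall>W. card W = 5 \<longrightarrow> \<not> is_clique X W)"

definition four_cycles_chorded :: "nat set set \<Rightarrow> bool" where
  "four_cycles_chorded X \<longleftrightarrow> (\<forall>a b c d. distinct [a, b, c, d] \<and>
     adjacent X a b \<and> adjacent X b c \<and> adjacent X c d \<and> adjacent X d a
       \<longrightarrow> adjacent X a c \<or> adjacent X b d)"

definition edges_in_at_most_two_facets :: "nat set set \<Rightarrow> bool" where
  "edges_in_at_most_two_facets X \<longleftrightarrow> (\<forall>x y s1 s2 s3. x \<noteq> y \<and> {s1, s2, s3} \<subseteq> X \<and>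
     {x, y} \<subseteq> s1 \<inter> s2 \<inter> s3 \<longrightarrow> s1 = s2 \<or> s1 = s3 \<or> s2 = s3)"

definition has_faceless_K4 :: "nat set set \<Rightarrow> bool" where
  "has_faceless_K4 X \<longleftrightarrow> (\<exists>W. card W = 4 \<and> is_clique X W \<and> (\<forall>s\<in>X. \<not> s \<subseteq> W))"

lemma adjacentI: "x \<noteq> y \<Longrightarrow> s \<in> X \<Longrightarrow> x \<in> s \<Longrightarrow> y \<in> s \<Longrightarrow> adjacent X x y"
  unfolding adjacent_def by blast

lemma adjacent_sym: "adjacent X x y \<Longrightarrow> adjacent X y x"
  unfolding adjacent_def by blast

lemma adjacent_in_vertices: "adjacent X x y \<Longrightarrow> x \<in> \<Union>X"
  unfolding adjacent_def by blast

lemma is_cliqueD: "is_clique X W \<Longrightarrow> x \<in> W \<Longrightarrow> y \<in> W \<Longrightarrow> x \<noteq> y \<Longrightarrow> adjacent X x y"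
  unfolding is_clique_def by blast

lemma is_clique_subset_vertices:
  assumes "is_clique X W" and "card W \<ge> 2"
  shows "W \<subseteq> \<Union>X"
proof
  fix w assume "w \<in> W"
  with assms(2) have "card (W - {w}) \<ge> 1" by (simp add: card_Diff_singleton_if)
  then have "W - {w} \<noteq> {}" by (metis card.empty not_one_le_zero)
  then obtain y where "y \<in> W" "y \<noteq> w" by blast
  then have "adjacent X w y" using assms(1) \<open>w \<in> W\<close> by (simp add: is_cliqueD)
  then show "w \<in> \<Union>X" by (rule adjacent_in_vertices)
qed

lemma card_eq_3_finite: "card t = 3 \<Longrightarrow> finite t"
  by (rule card_ge_0_finite) simp

lemma card_eq_3_obtain_other:
  assumes "card t = 3" and "y \<in> t"
  obtains z where "z \<in> t" "z \<noteq> y"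
proof -
  from assms have "card (t - {y}) = 2" by simp
  then obtain z where "z \<in> t - {y}" by (metis card.empty equals0I zero_neq_numeral)
  then show thesis using that by blast
qed

section \<open>Boundaries of stacked balls\<close>

lemma boundary_complexI:
  "card s = 3 \<Longrightarrow> T \<in> X \<Longrightarrow> s \<subseteq> T \<Longrightarrow> (\<And>T'. T' \<in> X \<Longrightarrow> s \<subseteq> T' \<Longrightarrow> T' = T)
    \<Longrightarrow> s \<in> boundary_complex X"
  unfolding boundary_complex_def by blast

lemma boundary_complexD:
  assumes "s \<in> boundary_complex X"
  shows "card s = 3" and "\<exists>T\<in>X. s \<subseteq> T"
    and "T1 \<in> X \<Longrightarrow> T2 \<in> X \<Longrightarrow> s \<subseteq> T1 \<Longrightarrow> s \<subseteq> T2 \<Longrightarrow> T1 = T2"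
  using assms unfolding boundary_complex_def by blast+

lemma card_insert_cone:
  "e \<subseteq> t \<Longrightarrow> card e = 2 \<Longrightarrow> v \<notin> t \<Longrightarrow> card (insert v e) = 3"
  by (metis card.infinite card_insert_disjoint eval_nat_numeral(3) subsetD zero_neq_numeral)

lemma boundary_complex_glue:
  assumes t: "t \<in> boundary_complex B" and v: "v \<notin> \<Union>B"
  shows "boundary_complex (insert (insert v t) B) =
           (boundary_complex B - {t}) \<union> {insert v e |e. e \<subseteq> t \<and> card e = 2}"
    (is "boundary_complex ?B' = _ \<union> ?cone")
proof (intro set_eqI)
  fix s
  obtain T0 where T0: "T0 \<in> B" "t \<subseteq> T0" using boundary_complexD(2)[OF t] by blast
  have ct: "card t = 3" using boundary_complexD(1)[OF t] .
  have vt: "v \<notin> t" using T0 v by blast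
  have v_old: "v \<notin> T" if "T \<in> B" for T using that v by blast
  show "s \<in> boundary_complex ?B' \<longleftrightarrow> s \<in> (boundary_complex B - {t}) \<union> ?cone"
  proof (cases "card s = 3")
    case False
    then show ?thesis using card_insert_cone[OF _ _ vt] by (auto simp: boundary_complex_def)
  next
    case cs: True
    consider (apex) "v \<in> s" | (base) "s = t" | (old) "v \<notin> s" "s \<noteq> t" by blast
    then show ?thesis
    proof cases
      case apex
      then have "s \<notin> boundary_complex B" using v_old by (meson boundary_complexD(2) subsetD)
      moreover have "s \<in> boundary_complex ?B' \<longleftrightarrow> s - {v} \<subseteq> t"
        using apex cs v_old unfolding boundary_complex_def by blast
      moreover have "s \<in> ?cone \<longleftrightarrow> s - {v} \<subseteq> t"
      proof
        assume "s - {v} \<subseteq> t"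
        then show "s \<in> ?cone" using apex cs by (intro CollectI exI[of _ "s - {v}"]) auto
      qed (use vt in auto)
      ultimately show ?thesis by blast
    next
      case base
      have "insert v t \<noteq> T0" using T0(1) v_old by blast
      then have "s \<notin> boundary_complex ?B'" using base T0 by (auto dest: boundary_complexD(3))
      moreover have "s \<notin> ?cone" using base vt by auto
      ultimately show ?thesis using base by blast
    next
      case old
      have "\<not> s \<subseteq> insert v t"
        using old cs ct by (metis card_eq_3_finite card_subset_eq subset_insert)
      then have "(\<exists>!T. T \<in> ?B' \<and> s \<subseteq> T) \<longleftrightarrow> (\<exists>!T. T \<in> B \<and> s \<subseteq> T)" by auto
      then have "s \<in> boundary_complex ?B' \<longleftrightarrow> s \<in> boundary_complex B"
        unfolding boundary_complex_def by simp
      moreover have "s \<notin> ?cone" using old by auto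
      ultimately show ?thesis using old(2) by blast
    qed
  qed
qed

lemma stacked_ball_card_facet: "stacked_ball B \<Longrightarrow> T \<in> B \<Longrightarrow> card T = 4"
proof (induction B rule: stacked_ball.induct)
  case (glue B t v)
  have "card t = 3" using boundary_complexD(1)[OF glue.hyps(2)] .
  moreover have "v \<notin> t" using boundary_complexD(2)[OF glue.hyps(2)] glue.hyps(3) by blast
  ultimately have "card (insert v t) = 4" by (simp add: card_eq_3_finite)
  then show ?case using glue by auto
qed simp

lemma stacked_ball_finite_boundary:
  assumes "stacked_ball B"
  shows "finite (boundary_complex B)"
proof (rule finite_subset)
  show "boundary_complex B \<subseteq> (\<Union>T\<in>B. Pow T)" by (auto simp: boundary_complex_def)
  have "finite B" using assms by induction auto
  moreover have "finite T" if "T \<in> B" for T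
    using stacked_ball_card_facet[OF assms that] by (simp add: card_ge_0_finite)
  ultimately show "finite (\<Union>T\<in>B. Pow T)" by blast
qed

lemma cone_edge:
  assumes "card t = 3" "x \<in> insert v t" "y \<in> insert v t" "x \<noteq> y"
  obtains e where "e \<subseteq> t" "card e = 2" "x \<in> insert v e" "y \<in> insert v e"
proof -
  consider "x \<in> t" "y \<in> t" | "x = v" "y \<in> t" | "y = v" "x \<in> t" using assms by blast
  then show thesis
  proof cases
    case 1
    then show thesis using that[of "{x, y}"] assms(4) by auto
  next
    case 2
    then obtain z where "z \<in> t" "z \<noteq> y" using card_eq_3_obtain_other assms(1) by metis
    then show thesis using that[of "{y, z}"] 2 by auto
  next
    case 3
    then obtain z where "z \<in> t" "z \<noteq> x" using card_eq_3_obtain_other assms(1) by metis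
    then show thesis using that[of "{x, z}"] 3 by auto
  qed
qed

lemma stacked_ball_boundary_covers_edges:
  "stacked_ball B \<Longrightarrow> T \<in> B \<Longrightarrow> x \<in> T \<Longrightarrow> y \<in> T \<Longrightarrow> x \<noteq> y
    \<Longrightarrow> \<exists>s\<in>boundary_complex B. x \<in> s \<and> y \<in> s"
proof (induction B arbitrary: T rule: stacked_ball.induct)
  case (single T0)
  then have "card (T0 - {x, y}) = 2" by (subst card_Diff_subset) (auto simp: card_ge_0_finite)
  then obtain w where w: "w \<in> T0" "w \<noteq> x" "w \<noteq> y"
    by (metis Diff_iff card.empty equals0I insertCI zero_neq_numeral)
  with single have "T0 - {w} \<in> boundary_complex {T0}"
    by (intro boundary_complexI[of _ T0]) (auto simp: card_Diff_singleton card_ge_0_finite)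
  with w single show ?case by (intro bexI[of _ "T0 - {w}"]) auto
next
  case (glue B t v)
  have ct: "card t = 3" using boundary_complexD(1)[OF glue.hyps(2)] .
  note bd_glue = boundary_complex_glue[OF glue.hyps(2,3)]
  have cone_face: "\<exists>s\<in>boundary_complex (insert (insert v t) B). x \<in> s \<and> y \<in> s"
    if xy: "x \<in> insert v t" "y \<in> insert v t"
  proof -
    obtain e where e: "e \<subseteq> t" "card e = 2" "x \<in> insert v e" "y \<in> insert v e"
      using cone_edge[OF ct xy glue.prems(4)] .
    then have "insert v e \<in> boundary_complex (insert (insert v t) B)" unfolding bd_glue by blast
    with e show ?thesis by blast
  qed
  show ?case
  proof (cases "T \<in> B")
    case True
    then obtain s where s: "s \<in> boundary_complex B" "x \<in> s" "y \<in> s" using glue by blast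
    show ?thesis
    proof (cases "s = t")
      case False
      then have "s \<in> boundary_complex (insert (insert v t) B)" using s(1) unfolding bd_glue by blast
      with s show ?thesis by blast
    qed (use s cone_face in simp)
  qed (use glue.prems cone_face in simp)
qed

lemma adjacent_boundary_complexD: "adjacent (boundary_complex X) x y \<Longrightarrow> adjacent X x y"
  unfolding adjacent_def by (meson boundary_complexD(2) subsetD)

lemma stacked_ball_adjacent_boundary_iff:
  assumes "stacked_ball B"
  shows "adjacent (boundary_complex B) x y \<longleftrightarrow> adjacent B x y"
  using adjacent_boundary_complexD stacked_ball_boundary_covers_edges[OF assms]
  unfolding adjacent_def by metis

lemma stacked_ball_boundary_vertices:
  assumes "stacked_ball B"
  shows "\<Union>(boundary_complex B) = \<Union>B"
proof
  show "\<Union>(boundary_complex B) \<subseteq> \<Union>B" by (blast dest: boundary_complexD(2))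
  show "\<Union>B \<subseteq> \<Union>(boundary_complex B)"
  proof
    fix x assume "x \<in> \<Union>B"
    then obtain T where T: "T \<in> B" "x \<in> T" by blast
    then have "card (T - {x}) = 3" using stacked_ball_card_facet[OF assms] by simp
    then obtain y where "y \<in> T" "y \<noteq> x" by (metis Diff_iff card.empty equals0I insertCI zero_neq_numeral)
    then have "adjacent (boundary_complex B) x y"
      using T stacked_ball_adjacent_boundary_iff[OF assms] by (metis adjacentI)
    then show "x \<in> \<Union>(boundary_complex B)" by (rule adjacent_in_vertices)
  qed
qed

lemma adjacent_glue_iff:
  assumes "T0 \<in> B" "t \<subseteq> T0" "v \<notin> \<Union>B"
  shows "adjacent (insert (insert v t) B) x y \<longleftrightarrow>
           adjacent B x y \<or> (x = v \<and> y \<in> t) \<or> (y = v \<and> x \<in> t)"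
  using assms unfolding adjacent_def by blast

lemma stacked_ball_K5_free: "stacked_ball B \<Longrightarrow> K5_free B"
proof (induction B rule: stacked_ball.induct)
  case (single T)
  show ?case unfolding K5_free_def
  proof (intro allI impI notI)
    fix W assume W: "card W = 5" "is_clique {T} W"
    then have "W \<subseteq> T" using is_clique_subset_vertices by fastforce
    then have "card W \<le> 4" using single card_mono[of T W] by (simp add: card_ge_0_finite)
    with W(1) show False by simp
  qed
next
  case (glue B t v)
  obtain T0 where T0: "T0 \<in> B" "t \<subseteq> T0" using boundary_complexD(2)[OF glue.hyps(2)] by blast
  note adj = adjacent_glue_iff[OF T0 glue.hyps(3)]
  have v_isolated: "\<not> adjacent B v w" for w using glue.hyps(3) adjacent_in_vertices by blast
  show ?case unfolding K5_free_def
  proof (intro allI impI notI)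
    fix W assume W: "card W = 5" "is_clique (insert (insert v t) B) W"
    show False
    proof (cases "v \<in> W")
      case True
      have "W - {v} \<subseteq> t" using is_cliqueD[OF W(2) True] v_isolated unfolding adj by blast
      then have "card (W - {v}) \<le> 3"
        using card_mono boundary_complexD(1)[OF glue.hyps(2)] card_eq_3_finite by metis
      with W(1) True show False by simp
    next
      case False
      then have "is_clique B W" using W(2) unfolding is_clique_def adj by blast
      with W(1) glue.IH show False unfolding K5_free_def by blast
    qed
  qed
qed

lemma stacked_ball_four_cycles_chorded: "stacked_ball B \<Longrightarrow> four_cycles_chorded B"
proof (induction B rule: stacked_ball.induct)
  case (single T)
  then show ?case unfolding four_cycles_chorded_def adjacent_def by auto
next
  case (glue B t v)
  obtain T0 where T0: "T0 \<in> B" "t \<subseteq> T0" using boundary_complexD(2)[OF glue.hyps(2)] by blast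
  note adj = adjacent_glue_iff[OF T0 glue.hyps(3)]
  have v_isolated: "\<not> adjacent B v w" "\<not> adjacent B w v" for w
    using glue.hyps(3) adjacent_in_vertices adjacent_sym by blast+
  have in_t: "p \<in> t \<Longrightarrow> q \<in> t \<Longrightarrow> p \<noteq> q \<Longrightarrow> adjacent B p q" for p q
    using T0 by (meson adjacentI subsetD)
  show ?case unfolding four_cycles_chorded_def
  proof (intro allI impI)
    fix a b c d
    assume cyc: "distinct [a, b, c, d] \<and> adjacent (insert (insert v t) B) a b \<and>
      adjacent (insert (insert v t) B) b c \<and> adjacent (insert (insert v t) B) c d \<and>
      adjacent (insert (insert v t) B) d a"
    show "adjacent (insert (insert v t) B) a c \<or> adjacent (insert (insert v t) B) b d"
    proof (cases "v \<in> {a, b, c, d}")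
      case True
      then show ?thesis using cyc v_isolated in_t unfolding adj by auto
    next
      case False
      then have "adjacent B a c \<or> adjacent B b d"
        using cyc glue.IH unfolding adj four_cycles_chorded_def by auto
      then show ?thesis unfolding adj by blast
    qed
  qed
qed

lemma tetrahedron_boundary_edge_card:
  assumes T: "card T = 4" and e: "card e = 2"
  shows "card {s \<in> boundary_complex {T}. e \<subseteq> s} \<le> 2"
proof -
  have fin: "finite T" using T by (simp add: card_ge_0_finite)
  have faces: "{s \<in> boundary_complex {T}. e \<subseteq> s} \<subseteq> (\<lambda>z. T - {z}) ` (T - e)"
  proof
    fix s assume "s \<in> {s \<in> boundary_complex {T}. e \<subseteq> s}"
    then have s: "s \<subseteq> T" "card s = 3" "e \<subseteq> s" using boundary_complexD(1,2)[of s "{T}"] by auto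
    then have "card (T - s) = 1" using T fin by (simp add: card_Diff_subset finite_subset)
    then obtain z where "T - s = {z}" by (rule card_1_singletonE)
    with s show "s \<in> (\<lambda>z. T - {z}) ` (T - e)" by blast
  qed
  show ?thesis
  proof (cases "e \<subseteq> T")
    case True
    then have "card (T - e) = 2" using T e fin by (simp add: card_Diff_subset finite_subset)
    with surj_card_le[OF _ faces] fin show ?thesis by simp
  next
    case False
    then have "{s \<in> boundary_complex {T}. e \<subseteq> s} = {}" by (auto dest: boundary_complexD(2))
    then show ?thesis by (metis card.empty le0)
  qed
qed

lemma glue_boundary_apex_edge_card:
  assumes t: "t \<in> boundary_complex B" and v: "v \<notin> \<Union>B" and e: "card e = 2" "v \<in> e"
  shows "card {s \<in> boundary_complex (insert (insert v t) B). e \<subseteq> s} \<le> 2"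
proof -
  obtain y where y: "e = {v, y}" "y \<noteq> v" using e by (metis card_2_iff insert_commute insertE singletonD)
  have old_faces: "\<not> e \<subseteq> s" if "s \<in> boundary_complex B" for s
    using boundary_complexD(2)[OF that] v y by blast
  have faces: "{s \<in> boundary_complex (insert (insert v t) B). e \<subseteq> s} \<subseteq> (\<lambda>z. insert z e) ` (t - {y})"
  proof
    fix s assume "s \<in> {s \<in> boundary_complex (insert (insert v t) B). e \<subseteq> s}"
    then obtain e' where e': "s = insert v e'" "e' \<subseteq> t" "card e' = 2" "y \<in> e'"
      unfolding boundary_complex_glue[OF t v] using old_faces y by auto
    then have "card (e' - {y}) = 1" by simp
    then obtain z where "e' - {y} = {z}" by (rule card_1_singletonE)
    with e' y show "s \<in> (\<lambda>z. insert z e) ` (t - {y})" by (intro image_eqI[of _ _ z]) auto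
  qed
  have ct: "card t = 3" using boundary_complexD(1)[OF t] .
  show ?thesis
  proof (cases "y \<in> t")
    case True
    with surj_card_le[OF _ faces] ct show ?thesis by (simp add: card_eq_3_finite)
  next
    case False
    then have "{s \<in> boundary_complex (insert (insert v t) B). e \<subseteq> s} = {}"
      unfolding boundary_complex_glue[OF t v] using old_faces y by auto
    then show ?thesis by (metis card.empty le0)
  qed
qed

lemma glue_boundary_edge_card_le:
  assumes t: "t \<in> boundary_complex B" and v: "v \<notin> \<Union>B" and fin: "finite (boundary_complex B)"
    and e: "card e = 2" "v \<notin> e"
  shows "card {s \<in> boundary_complex (insert (insert v t) B). e \<subseteq> s}
           \<le> card {s \<in> boundary_complex B. e \<subseteq> s}"
proof (rule surj_card_le)
  show "finite {s \<in> boundary_complex B. e \<subseteq> s}" using fin by simp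
  show "{s \<in> boundary_complex (insert (insert v t) B). e \<subseteq> s} \<subseteq>
          (\<lambda>s. if s = t then insert v e else s) ` {s \<in> boundary_complex B. e \<subseteq> s}"
  proof
    fix s assume s: "s \<in> {s \<in> boundary_complex (insert (insert v t) B). e \<subseteq> s}"
    show "s \<in> (\<lambda>s. if s = t then insert v e else s) ` {s \<in> boundary_complex B. e \<subseteq> s}"
    proof (cases "s \<in> boundary_complex B - {t}")
      case True
      with s show ?thesis by (intro image_eqI[of _ _ s]) auto
    next
      case False
      with s obtain e' where e': "s = insert v e'" "e' \<subseteq> t" "card e' = 2"
        unfolding boundary_complex_glue[OF t v] by blast
      then have "e \<subseteq> e'" using s e(2) by auto
      then have "e = e'" using e' e(1) by (simp add: card_subset_eq card_ge_0_finite)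
      with s e' t show ?thesis by (intro image_eqI[of _ _ t]) auto
    qed
  qed
qed

lemma stacked_ball_boundary_edge_card:
  "stacked_ball B \<Longrightarrow> card e = 2 \<Longrightarrow> card {s \<in> boundary_complex B. e \<subseteq> s} \<le> 2"
proof (induction B rule: stacked_ball.induct)
  case (single T)
  then show ?case by (rule tetrahedron_boundary_edge_card)
next
  case (glue B t v)
  show ?case
  proof (cases "v \<in> e")
    case True
    with glue show ?thesis by (intro glue_boundary_apex_edge_card)
  next
    case False
    have "card {s \<in> boundary_complex (insert (insert v t) B). e \<subseteq> s}
            \<le> card {s \<in> boundary_complex B. e \<subseteq> s}"
      using glue_boundary_edge_card_le[OF glue.hyps(2,3) stacked_ball_finite_boundary[OF glue.hyps(1)]
          glue.prems False] .
    with glue.IH[OF glue.prems] show ?thesis by linarith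
  qed
qed

lemma edges_in_at_most_two_facetsD:
  "edges_in_at_most_two_facets X \<Longrightarrow> x \<noteq> y \<Longrightarrow> {s1, s2, s3} \<subseteq> X \<Longrightarrow>
    {x, y} \<subseteq> s1 \<inter> s2 \<inter> s3 \<Longrightarrow> s1 = s2 \<or> s1 = s3 \<or> s2 = s3"
  unfolding edges_in_at_most_two_facets_def by blast

lemma edges_in_at_most_two_facetsI:
  assumes "finite X" and "\<And>e. card e = 2 \<Longrightarrow> card {s \<in> X. e \<subseteq> s} \<le> 2"
  shows "edges_in_at_most_two_facets X"
  unfolding edges_in_at_most_two_facets_def
proof (intro allI impI)
  fix x y s1 s2 s3
  assume h: "x \<noteq> y \<and> {s1, s2, s3} \<subseteq> X \<and> {x, y} \<subseteq> s1 \<inter> s2 \<inter> s3"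
  then have "card {s1, s2, s3} \<le> card {s \<in> X. {x, y} \<subseteq> s}"
    using assms(1) by (intro card_mono) auto
  also have "\<dots> \<le> 2" using assms(2)[of "{x, y}"] h by simp
  finally show "s1 = s2 \<or> s1 = s3 \<or> s2 = s3" by (auto simp: card_insert_if split: if_splits)
qed

lemma stacked_ball_boundary_edges_in_at_most_two_facets:
  "stacked_ball B \<Longrightarrow> edges_in_at_most_two_facets (boundary_complex B)"
  by (intro edges_in_at_most_two_facetsI stacked_ball_finite_boundary stacked_ball_boundary_edge_card)

lemma complex_iso_refl: "complex_iso X X"
  unfolding complex_iso_def by (intro exI[of _ id]) auto

lemma complex_iso_sym:
  assumes "complex_iso X Y"
  shows "complex_iso Y X"
proof -
  obtain f where f: "bij_betw f (\<Union>X) (\<Union>Y)" "(\<lambda>s. f ` s) ` X = Y"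
    using assms unfolding complex_iso_def by blast
  let ?g = "inv_into (\<Union>X) f"
  have "(\<lambda>s. ?g ` s) ` Y = (\<lambda>s. ?g ` f ` s) ` X" unfolding f(2)[symmetric] by (rule image_image)
  also have "\<dots> = X"
    using inv_into_image_cancel[OF bij_betw_imp_inj_on[OF f(1)]] by (simp add: Sup_upper)
  finally have "(\<lambda>s. ?g ` s) ` Y = X" .
  with bij_betw_inv_into[OF f(1)] show ?thesis unfolding complex_iso_def by blast
qed

lemma complex_iso_trans:
  assumes "complex_iso X Y" "complex_iso Y Z"
  shows "complex_iso X Z"
proof -
  obtain f where f: "bij_betw f (\<Union>X) (\<Union>Y)" "(\<lambda>s. f ` s) ` X = Y"
    using assms(1) unfolding complex_iso_def by blast
  obtain g where g: "bij_betw g (\<Union>Y) (\<Union>Z)" "(\<lambda>s. g ` s) ` Y = Z"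
    using assms(2) unfolding complex_iso_def by blast
  have "(\<lambda>s. (g \<circ> f) ` s) ` X = Z" using f(2) g(2) by (auto simp: image_comp[symmetric])
  with bij_betw_trans[OF f(1) g(1)] show ?thesis unfolding complex_iso_def by blast
qed

lemma complex_isoE:
  assumes "complex_iso X Y"
  obtains f where "inj_on f (\<Union>X)" "(\<lambda>s. f ` s) ` X = Y"
  using assms unfolding complex_iso_def bij_betw_def by blast

lemma adjacent_image_iff:
  assumes "inj_on f (\<Union>X)" and "x \<in> \<Union>X" "y \<in> \<Union>X"
  shows "adjacent ((\<lambda>s. f ` s) ` X) (f x) (f y) \<longleftrightarrow> adjacent X x y"
proof -
  have "f x \<in> f ` s \<longleftrightarrow> x \<in> s" if "s \<in> X" for s
    using inj_on_image_mem_iff[OF assms(1) assms(2)] that by blast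
  moreover have "f y \<in> f ` s \<longleftrightarrow> y \<in> s" if "s \<in> X" for s
    using inj_on_image_mem_iff[OF assms(1) assms(3)] that by blast
  moreover have "f x = f y \<longleftrightarrow> x = y" using assms by (simp add: inj_on_eq_iff)
  ultimately show ?thesis unfolding adjacent_def by auto
qed

lemma is_clique_image:
  assumes "inj_on f (\<Union>X)" "is_clique X W" "W \<subseteq> \<Union>X"
  shows "is_clique ((\<lambda>s. f ` s) ` X) (f ` W)"
  unfolding is_clique_def
proof (intro ballI impI)
  fix a b assume "a \<in> f ` W" "b \<in> f ` W" "a \<noteq> b"
  then obtain x y where "x \<in> W" "y \<in> W" "a = f x" "b = f y" "x \<noteq> y" by blast
  then show "adjacent ((\<lambda>s. f ` s) ` X) a b"
    using adjacent_image_iff[OF assms(1)] is_cliqueD[OF assms(2)] assms(3) by blast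
qed

lemma K5_free_complex_iso:
  assumes "complex_iso X Y" "K5_free Y"
  shows "K5_free X"
  unfolding K5_free_def
proof (intro allI impI notI)
  fix W assume W: "card W = 5" "is_clique X W"
  obtain f where f: "inj_on f (\<Union>X)" "(\<lambda>s. f ` s) ` X = Y" using assms(1) by (rule complex_isoE)
  have sub: "W \<subseteq> \<Union>X" using is_clique_subset_vertices W by simp
  have "card (f ` W) = 5" using W(1) card_image[OF inj_on_subset[OF f(1) sub]] by simp
  moreover have "is_clique Y (f ` W)" using is_clique_image[OF f(1) W(2) sub] f(2) by simp
  ultimately show False using assms(2) unfolding K5_free_def by blast
qed

lemma four_cycles_chorded_complex_iso:
  assumes "complex_iso X Y" "four_cycles_chorded Y"
  shows "four_cycles_chorded X"
  unfolding four_cycles_chorded_def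
proof (intro allI impI)
  fix a b c d
  assume cyc: "distinct [a, b, c, d] \<and> adjacent X a b \<and> adjacent X b c \<and> adjacent X c d \<and> adjacent X d a"
  obtain f where f: "inj_on f (\<Union>X)" "(\<lambda>s. f ` s) ` X = Y" using assms(1) by (rule complex_isoE)
  have V: "a \<in> \<Union>X" "b \<in> \<Union>X" "c \<in> \<Union>X" "d \<in> \<Union>X" using cyc adjacent_in_vertices by blast+
  note adj = adjacent_image_iff[OF f(1), unfolded f(2)]
  have "distinct [f a, f b, f c, f d]" using cyc V f(1) by (simp add: inj_on_eq_iff)
  moreover have "adjacent Y (f a) (f b)" "adjacent Y (f b) (f c)" "adjacent Y (f c) (f d)"
    "adjacent Y (f d) (f a)" using cyc V adj by simp_all
  ultimately have "adjacent Y (f a) (f c) \<or> adjacent Y (f b) (f d)"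
    using assms(2) unfolding four_cycles_chorded_def by blast
  then show "adjacent X a c \<or> adjacent X b d" using V adj by blast
qed

lemma edges_in_at_most_two_facets_complex_iso:
  assumes "complex_iso X Y" "edges_in_at_most_two_facets Y"
  shows "edges_in_at_most_two_facets X"
  unfolding edges_in_at_most_two_facets_def
proof (intro allI impI)
  fix x y s1 s2 s3
  assume h: "x \<noteq> y \<and> {s1, s2, s3} \<subseteq> X \<and> {x, y} \<subseteq> s1 \<inter> s2 \<inter> s3"
  obtain f where f: "inj_on f (\<Union>X)" "(\<lambda>s. f ` s) ` X = Y" using assms(1) by (rule complex_isoE)
  have sub: "s1 \<subseteq> \<Union>X" "s2 \<subseteq> \<Union>X" "s3 \<subseteq> \<Union>X" using h by auto
  have "x \<in> \<Union>X" "y \<in> \<Union>X" using h by auto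
  then have "f x \<noteq> f y" using h f(1) by (simp add: inj_on_eq_iff)
  moreover have "{f ` s1, f ` s2, f ` s3} \<subseteq> Y" using h f(2) by blast
  moreover have "{f x, f y} \<subseteq> f ` s1 \<inter> f ` s2 \<inter> f ` s3" using h by auto
  ultimately have "f ` s1 = f ` s2 \<or> f ` s1 = f ` s3 \<or> f ` s2 = f ` s3"
    by (rule edges_in_at_most_two_facetsD[OF assms(2)])
  then show "s1 = s2 \<or> s1 = s3 \<or> s2 = s3"
    using inj_on_image_eq_iff[OF f(1) sub(1) sub(2)] inj_on_image_eq_iff[OF f(1) sub(1) sub(3)]
      inj_on_image_eq_iff[OF f(1) sub(2) sub(3)] by argo
qed

lemma has_faceless_K4_complex_iso:
  assumes "complex_iso X Y" "has_faceless_K4 X"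
  shows "has_faceless_K4 Y"
proof -
  obtain f where f: "inj_on f (\<Union>X)" "(\<lambda>s. f ` s) ` X = Y" using assms(1) by (rule complex_isoE)
  obtain W where W: "card W = 4" "is_clique X W" "\<forall>s\<in>X. \<not> s \<subseteq> W"
    using assms(2) unfolding has_faceless_K4_def by blast
  have sub: "W \<subseteq> \<Union>X" using is_clique_subset_vertices W by simp
  have "card (f ` W) = 4" using W(1) card_image[OF inj_on_subset[OF f(1) sub]] by simp
  moreover have "is_clique Y (f ` W)" using is_clique_image[OF f(1) W(2) sub] f(2) by simp
  moreover have "\<not> f ` s \<subseteq> f ` W" if "s \<in> X" for s
  proof
    assume "f ` s \<subseteq> f ` W"
    then have "s \<subseteq> W" using inj_on_image_mem_iff[OF f(1) _ sub] that by blast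
    with W(3) that show False by blast
  qed
  ultimately show ?thesis using f(2) unfolding has_faceless_K4_def by blast
qed

lemma stacked_sphere_complex_iso: "stacked_sphere S \<Longrightarrow> complex_iso S' S \<Longrightarrow> stacked_sphere S'"
  unfolding stacked_sphere_def using complex_iso_trans by blast

lemma stacked_sphere_boundary: "stacked_ball B \<Longrightarrow> stacked_sphere (boundary_complex B)"
  unfolding stacked_sphere_def using complex_iso_refl by blast

lemma stacked_sphere_K5_free:
  assumes "stacked_sphere S"
  shows "K5_free S"
proof -
  obtain B where B: "stacked_ball B" "complex_iso S (boundary_complex B)"
    using assms unfolding stacked_sphere_def by blast
  have "K5_free (boundary_complex B)"
    using stacked_ball_K5_free[OF B(1)] stacked_ball_adjacent_boundary_iff[OF B(1)]
    unfolding K5_free_def is_clique_def by simp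
  with B(2) show ?thesis by (rule K5_free_complex_iso)
qed

lemma stacked_sphere_four_cycles_chorded:
  assumes "stacked_sphere S"
  shows "four_cycles_chorded S"
proof -
  obtain B where B: "stacked_ball B" "complex_iso S (boundary_complex B)"
    using assms unfolding stacked_sphere_def by blast
  have "four_cycles_chorded (boundary_complex B)"
    using stacked_ball_four_cycles_chorded[OF B(1)] stacked_ball_adjacent_boundary_iff[OF B(1)]
    unfolding four_cycles_chorded_def by simp
  with B(2) show ?thesis by (rule four_cycles_chorded_complex_iso)
qed

lemma stacked_sphere_edges_in_at_most_two_facets:
  assumes "stacked_sphere S"
  shows "edges_in_at_most_two_facets S"
proof -
  obtain B where B: "stacked_ball B" "complex_iso S (boundary_complex B)"
    using assms unfolding stacked_sphere_def by blast
  from B(2) stacked_ball_boundary_edges_in_at_most_two_facets[OF B(1)] show ?thesis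
    by (rule edges_in_at_most_two_facets_complex_iso)
qed

section \<open>Edge flips between stacked spheres\<close>

lemma edge_flipE:
  assumes "edge_flip K L"
  obtains a b c d where "distinct [a, b, c, d]" "{a, b, c} \<in> K" "{a, b, d} \<in> K"
    "\<not> adjacent K c d" "L = (K - {{a, b, c}, {a, b, d}}) \<union> {{a, c, d}, {b, c, d}}"
proof -
  obtain a b c d where flip: "distinct [a, b, c, d]" "{a, b, c} \<in> K" "{a, b, d} \<in> K"
    "\<not> (\<exists>s\<in>K. {c, d} \<subseteq> s)" "L = (K - {{a, b, c}, {a, b, d}}) \<union> {{a, c, d}, {b, c, d}}"
    using assms unfolding edge_flip_def by (elim exE conjE) blast
  moreover have "\<not> adjacent K c d" using flip(4) unfolding adjacent_def by blast
  ultimately show thesis using that by blast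
qed

lemma adjacent_flip_iff:
  assumes L: "L = (K - {{a, b, c}, {a, b, d}}) \<union> {{a, c, d}, {b, c, d}}"
    and K: "{a, b, c} \<in> K" "{a, b, d} \<in> K"
    and xy: "\<not> (x \<in> {a, b} \<and> y \<in> {a, b})" "\<not> (x \<in> {c, d} \<and> y \<in> {c, d})"
  shows "adjacent L x y \<longleftrightarrow> adjacent K x y"
proof -
  have new: "{a, c, d} \<in> L" "{b, c, d} \<in> L" using L by auto
  have "\<exists>s\<in>L. x \<in> s \<and> y \<in> s" if s: "s \<in> K" "x \<in> s" "y \<in> s" for s
  proof (cases "s \<in> L")
    case False
    then have "s = {a, b, c} \<or> s = {a, b, d}" using s(1) L by blast
    then have "(x \<in> {a, c, d} \<and> y \<in> {a, c, d}) \<or> (x \<in> {b, c, d} \<and> y \<in> {b, c, d})"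
      using s(2,3) xy by auto
    then show ?thesis using new by metis
  qed (use s in blast)
  moreover have "\<exists>s\<in>K. x \<in> s \<and> y \<in> s" if s: "s \<in> L" "x \<in> s" "y \<in> s" for s
  proof (cases "s \<in> K")
    case False
    then have "s = {a, c, d} \<or> s = {b, c, d}" using s(1) L by blast
    then have "(x \<in> {a, b, c} \<and> y \<in> {a, b, c}) \<or> (x \<in> {a, b, d} \<and> y \<in> {a, b, d})"
      using s(2,3) xy by auto
    then show ?thesis using K by metis
  qed (use s in blast)
  ultimately show ?thesis unfolding adjacent_def by blast
qed

lemma edge_flip_removes_edge:
  assumes K: "edges_in_at_most_two_facets K" "{a, b, c} \<in> K" "{a, b, d} \<in> K"
    and L: "L = (K - {{a, b, c}, {a, b, d}}) \<union> {{a, c, d}, {b, c, d}}"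
    and abcd: "distinct [a, b, c, d]"
  shows "\<not> adjacent L a b"
proof
  assume "adjacent L a b"
  then obtain s where s: "s \<in> L" "a \<in> s" "b \<in> s" unfolding adjacent_def by blast
  have "s \<noteq> {a, c, d}" "s \<noteq> {b, c, d}" using s abcd by auto
  then have "s \<in> K" "s \<noteq> {a, b, c}" "s \<noteq> {a, b, d}" using s(1) L by auto
  moreover have "{a, b, c} \<noteq> {a, b, d}" using abcd by auto
  ultimately show False
    using edges_in_at_most_two_facetsD[OF K(1), of a b "{a, b, c}" "{a, b, d}" s] K(2,3) s abcd
    by auto
qed

lemma edge_flip_converse:
  assumes K: "edges_in_at_most_two_facets K" and flip: "edge_flip K L"
  shows "edge_flip L K"
proof -
  obtain a b c d where abcd: "distinct [a, b, c, d]" and abc: "{a, b, c} \<in> K" and abd: "{a, b, d} \<in> K"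
    and cd: "\<not> adjacent K c d" and L: "L = (K - {{a, b, c}, {a, b, d}}) \<union> {{a, c, d}, {b, c, d}}"
    using flip by (rule edge_flipE)
  have "{a, c, d} \<notin> K" "{b, c, d} \<notin> K" using cd abcd by (auto intro: adjacentI)
  then have "K = (L - {{a, c, d}, {b, c, d}}) \<union> {{a, b, c}, {a, b, d}}" using L abc abd by blast
  moreover have "{c, d, a} = {a, c, d}" "{c, d, b} = {b, c, d}" "{c, a, b} = {a, b, c}"
    "{d, a, b} = {a, b, d}" by auto
  moreover have "\<not> (\<exists>s\<in>L. {a, b} \<subseteq> s)"
    using edge_flip_removes_edge[OF K abc abd L abcd] abcd unfolding adjacent_def by auto
  moreover have "distinct [c, d, a, b]" "{a, c, d} \<in> L" "{b, c, d} \<in> L" using abcd L by auto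
  ultimately show ?thesis
    unfolding edge_flip_def by (intro exI[of _ c] exI[of _ d] exI[of _ a] exI[of _ b]) simp
qed

lemma card_eq_4_obtain:
  assumes "card W = 4" "a \<in> W" "b \<in> W" "a \<noteq> b"
  obtains y z where "W = {a, b, y, z}" "distinct [a, b, y, z]"
proof -
  have "card (W - {a, b}) = 2" using assms by (simp add: card_Diff_subset card_ge_0_finite)
  then obtain y z where yz: "W - {a, b} = {y, z}" "y \<noteq> z" by (meson card_2_iff)
  then have "W = {a, b, y, z}" using assms(2,3) by blast
  moreover have "distinct [a, b, y, z]" using yz assms(4) by (simp; blast)
  ultimately show ?thesis using that by blast
qed

lemma K5_freeD:
  assumes "K5_free X" "distinct [a, b, c, d, e]"
    and "adjacent X a b" "adjacent X a c" "adjacent X a d" "adjacent X a e" "adjacent X b c"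
      "adjacent X b d" "adjacent X b e" "adjacent X c d" "adjacent X c e" "adjacent X d e"
  shows False
proof -
  have "is_clique X {a, b, c, d, e}" unfolding is_clique_def using assms(3-) adjacent_sym by blast
  moreover have "card {a, b, c, d, e} = 5" using assms(2) by simp
  ultimately show False using assms(1) unfolding K5_free_def by blast
qed

lemma edge_flip_common_neighbour_adjacent:
  assumes L: "four_cycles_chorded L" and ab: "\<not> adjacent L a b"
    and L_eq: "L = (K - {{a, b, c}, {a, b, d}}) \<union> {{a, c, d}, {b, c, d}}"
    and abc: "{a, b, c} \<in> K" and abd: "{a, b, d} \<in> K" and abcd: "distinct [a, b, c, d]"
    and w: "w \<notin> {a, b, c, d}" "adjacent K a w" "adjacent K b w"
  shows "adjacent K c w"
proof -
  note adj_iff = adjacent_flip_iff[OF L_eq abc abd]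
  have "adjacent L b w" "adjacent L w a" using w adj_iff adjacent_sym abcd by auto
  moreover have "adjacent L a c" "adjacent L c b" using L_eq abcd by (auto intro: adjacentI)
  moreover have "distinct [a, c, b, w]" using w abcd by auto
  ultimately have "adjacent L c w" using L ab unfolding four_cycles_chorded_def by blast
  then show ?thesis using adj_iff w abcd by auto
qed

lemma has_faceless_K4_edge_flip:
  assumes K: "K5_free K" "edges_in_at_most_two_facets K" and L: "four_cycles_chorded L"
    and flip: "edge_flip K L" and K4: "has_faceless_K4 K"
  shows "has_faceless_K4 L"
proof -
  obtain W where W: "card W = 4" "is_clique K W" "\<forall>s\<in>K. \<not> s \<subseteq> W"
    using K4 unfolding has_faceless_K4_def by blast
  obtain a b c d where abcd: "distinct [a, b, c, d]" and abc: "{a, b, c} \<in> K" and abd: "{a, b, d} \<in> K"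
    and cd: "\<not> adjacent K c d" and L_eq: "L = (K - {{a, b, c}, {a, b, d}}) \<union> {{a, c, d}, {b, c, d}}"
    using flip by (rule edge_flipE)
  have ab: "\<not> adjacent L a b" using edge_flip_removes_edge[OF K(2) abc abd L_eq abcd] .
  show ?thesis
  proof (cases "a \<in> W \<and> b \<in> W")
    case False
    have cd_W: "\<not> (c \<in> W \<and> d \<in> W)" using cd is_cliqueD[OF W(2)] abcd by auto
    have "is_clique L W" unfolding is_clique_def
    proof (intro ballI impI)
      fix x y assume xy: "x \<in> W" "y \<in> W" "x \<noteq> y"
      then have "\<not> (x \<in> {a, b} \<and> y \<in> {a, b})" "\<not> (x \<in> {c, d} \<and> y \<in> {c, d})"
        using False cd_W by auto
      with is_cliqueD[OF W(2) xy] show "adjacent L x y" using adjacent_flip_iff[OF L_eq abc abd] by blast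
    qed
    moreover have "\<not> s \<subseteq> W" if "s \<in> L" for s
    proof (cases "s \<in> K")
      case False
      then have "s = {a, c, d} \<or> s = {b, c, d}" using that L_eq by blast
      then show ?thesis using cd_W by auto
    qed (use W(3) in blast)
    ultimately show ?thesis using W(1) unfolding has_faceless_K4_def by blast
  next
    case True
    then obtain y z where yz: "W = {a, b, y, z}" "distinct [a, b, y, z]"
      using card_eq_4_obtain W(1) abcd by (metis distinct_length_2_or_more)
    have "c \<notin> W" "d \<notin> W" using True W(3) abc abd by auto
    with yz have abcyz: "distinct [a, b, c, y, z]" using abcd by auto
    have W_adj: "adjacent K a y" "adjacent K a z" "adjacent K b y" "adjacent K b z" "adjacent K y z"
      using is_cliqueD[OF W(2)] yz by auto
    have "adjacent K c y" "adjacent K c z"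
      using edge_flip_common_neighbour_adjacent[OF L ab L_eq abc abd abcd] W_adj yz
        \<open>c \<notin> W\<close> \<open>d \<notin> W\<close> by auto
    moreover have "adjacent K a b" "adjacent K a c" "adjacent K b c" using abc abcd by (auto intro: adjacentI)
    ultimately show ?thesis using K5_freeD[OF K(1) abcyz] W_adj by blast
  qed
qed

section \<open>Two stacked balls\<close>

lemma interior_facet_faceless_K4:
  assumes B: "stacked_ball B" and W: "W \<in> B"
    and covered: "\<And>s. s \<subseteq> W \<Longrightarrow> card s = 3 \<Longrightarrow> \<exists>T\<in>B. T \<noteq> W \<and> s \<subseteq> T"
  shows "has_faceless_K4 (boundary_complex B)"
proof -
  have "is_clique (boundary_complex B) W"
    unfolding is_clique_def stacked_ball_adjacent_boundary_iff[OF B] using W by (auto intro: adjacentI)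
  moreover have "\<not> s \<subseteq> W" if s: "s \<in> boundary_complex B" for s
  proof
    assume "s \<subseteq> W"
    then obtain T where "T \<in> B" "T \<noteq> W" "s \<subseteq> T"
      using covered[OF _ boundary_complexD(1)[OF s]] by blast
    with W \<open>s \<subseteq> W\<close> show False using boundary_complexD(3)[OF s] by blast
  qed
  ultimately show ?thesis using stacked_ball_card_facet[OF B W] unfolding has_faceless_K4_def by blast
qed

definition path_ball :: "nat \<Rightarrow> nat set set" where
  "path_ball m = (\<lambda>i. {i..i + 3}) ` {..<m - 3}"

lemma path_ball_mem: "T \<in> path_ball m \<longleftrightarrow> (\<exists>i. i + 3 < m \<and> T = {i..i + 3})"
  unfolding path_ball_def by auto

lemma path_ball_vertices:
  assumes "4 \<le> m"
  shows "\<Union>(path_ball m) = {..<m}"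
proof
  show "\<Union>(path_ball m) \<subseteq> {..<m}" by (rule Union_least) (auto simp: path_ball_mem)
  show "{..<m} \<subseteq> \<Union>(path_ball m)"
  proof
    fix x assume "x \<in> {..<m}"
    then have "x \<in> {min x (m - 4)..min x (m - 4) + 3}" "{min x (m - 4)..min x (m - 4) + 3} \<in> path_ball m"
      using assms by (auto simp: path_ball_mem)
    then show "x \<in> \<Union>(path_ball m)" by (rule UnionI[rotated])
  qed
qed

lemma path_ball_boundary_face:
  assumes "card s = 3" "s \<subseteq> {i..i + 3}" "i + 3 < m"
    and "\<And>j. j + 3 < m \<Longrightarrow> s \<subseteq> {j..j + 3} \<Longrightarrow> j = i"
  shows "s \<in> boundary_complex (path_ball m)"
proof (rule boundary_complexI[of s "{i..i + 3}"])
  fix T' assume "T' \<in> path_ball m" "s \<subseteq> T'"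
  then obtain j where "j + 3 < m" "T' = {j..j + 3}" "s \<subseteq> {j..j + 3}" by (auto simp: path_ball_mem)
  with assms(4) show "T' = {i..i + 3}" by simp
next
  show "{i..i + 3} \<in> path_ball m" unfolding path_ball_mem using assms(3) by (intro exI[of _ i]) simp
qed (use assms(1,2) in simp_all)

lemma stacked_ball_path_ball: "4 \<le> m \<Longrightarrow> stacked_ball (path_ball m)"
proof (induction m rule: dec_induct)
  case base
  have "path_ball 4 = {{0..3}}" unfolding path_ball_def by auto
  then show ?case using stacked_ball.single[of "{0..3}"] by simp
next
  case (step m)
  have face: "{m - 3..m - 1} \<in> boundary_complex (path_ball m)"
  proof (rule path_ball_boundary_face[of _ "m - 4"])
    fix j assume "j + 3 < m" "{m - 3..m - 1} \<subseteq> {j..j + 3}"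
    then have "j + 3 < m" "m - 1 \<le> j + 3" using step(1) by auto
    then show "j = m - 4" using step(1) by linarith
  next
    show "card {m - 3..m - 1} = 3" using step(1) by simp
  qed (use step(1) in auto)
  have fresh: "m \<notin> \<Union>(path_ball m)" using path_ball_vertices[OF step(1)] by simp
  have "path_ball (Suc m) = insert (insert m {m - 3..m - 1}) (path_ball m)"
  proof -
    have "insert m {m - 3..m - 1} = {m - 3..m - 3 + 3}" using step(1) by auto
    moreover have "{..<Suc m - 3} = insert (m - 3) {..<m - 3}" using step(1) by auto
    ultimately show ?thesis unfolding path_ball_def by simp
  qed
  with stacked_ball.glue[OF step(3) face fresh] show ?case by (simp only:)
qed

(* Adjacent vertices of the path ball differ by at most 3, so a 4-clique is an interval
   {i..i+3}, and its face {i, i+1, i+3} lies on the boundary. *)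
lemma path_ball_no_faceless_K4:
  assumes m: "4 \<le> m"
  shows "\<not> has_faceless_K4 (boundary_complex (path_ball m))"
proof
  assume "has_faceless_K4 (boundary_complex (path_ball m))"
  then obtain W where W: "card W = 4" "is_clique (path_ball m) W"
      "\<forall>s\<in>boundary_complex (path_ball m). \<not> s \<subseteq> W"
    unfolding has_faceless_K4_def is_clique_def
      stacked_ball_adjacent_boundary_iff[OF stacked_ball_path_ball[OF m]] by blast
  have near: "\<exists>j. j + 3 < m \<and> x \<in> {j..j + 3} \<and> y \<in> {j..j + 3}"
    if xy: "x \<in> W" "y \<in> W" "x \<noteq> y" for x y
  proof -
    obtain T where "T \<in> path_ball m" "x \<in> T" "y \<in> T"
      using is_cliqueD[OF W(2) xy] unfolding adjacent_def by blast
    then show ?thesis by (auto simp: path_ball_mem)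
  qed
  define i where "i = Min W"
  have fin: "finite W" "W \<noteq> {}" using W(1) by (auto intro: card_ge_0_finite)
  then have i: "i \<in> W" "\<And>w. w \<in> W \<Longrightarrow> i \<le> w" unfolding i_def by auto
  have "W \<subseteq> {i..i + 3}"
  proof
    fix w assume w: "w \<in> W"
    show "w \<in> {i..i + 3}"
    proof (cases "w = i")
      case False
      then show ?thesis using near[OF i(1) w] i(2)[OF w] by auto
    qed simp
  qed
  then have W_eq: "W = {i..i + 3}" using W(1) by (intro card_subset_eq) auto
  obtain j where "j + 3 < m" "i \<in> {j..j + 3}" "i + 3 \<in> {j..j + 3}"
    using near[of i "i + 3"] W_eq by auto
  then have "i + 3 < m" by simp
  have "{i, i + 1, i + 3} \<in> boundary_complex (path_ball m)"
  proof (rule path_ball_boundary_face[OF _ _ \<open>i + 3 < m\<close>])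
    fix j assume "{i, i + 1, i + 3} \<subseteq> {j..j + 3}"
    then show "j = i" by simp
  qed auto
  moreover have "{i, i + 1, i + 3} \<subseteq> W" using W_eq by auto
  ultimately show False using W(3) by blast
qed

(* Gluing n-2 onto the face 124 and n-1 onto 134 of the tetrahedron {1,2,3,4} makes it interior:
   its other faces 123 and 234 lie in {0..3} and {2..5}, the latter being a tetrahedron of the path
   ball on n-2 vertices only for n >= 8. *)
definition capped_path_ball :: "nat \<Rightarrow> nat set set" where
  "capped_path_ball n = insert {n - 1, 1, 3, 4} (insert {n - 2, 1, 2, 4} (path_ball (n - 2)))"

lemma capped_path_ball_vertices:
  assumes "8 \<le> n"
  shows "\<Union>(capped_path_ball n) = {..<n}"
proof -
  have "\<Union>(path_ball (n - 2)) = {..<n - 2}" using assms by (intro path_ball_vertices) simp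
  then have "\<Union>(capped_path_ball n) = {n - 1, 1, 3, 4} \<union> ({n - 2, 1, 2, 4} \<union> {..<n - 2})"
    unfolding capped_path_ball_def by simp
  also have "\<dots> = {..<n}" using assms by auto
  finally show ?thesis .
qed

lemma stacked_ball_capped_path_ball:
  assumes n: "8 \<le> n"
  shows "stacked_ball (capped_path_ball n)"
proof -
  let ?P = "path_ball (n - 2)"
  have P: "stacked_ball ?P" "\<Union>?P = {..<n - 2}"
    using n by (simp_all add: stacked_ball_path_ball path_ball_vertices)
  have face: "{1, a, 4} \<in> boundary_complex ?P" if "a \<in> {2, 3}" for a
  proof (rule path_ball_boundary_face[of _ 1])
    fix j assume "{1, a, 4} \<subseteq> {j..j + 3}"
    then show "j = 1" by simp
  qed (use that n in auto)
  have face124: "{1, 2, 4} \<in> boundary_complex ?P" and face134: "{1, 3, 4} \<in> boundary_complex ?P"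
    using face by simp_all
  have fresh: "n - 2 \<notin> \<Union>?P" using P(2) by simp
  have B2: "stacked_ball (insert {n - 2, 1, 2, 4} ?P)" using stacked_ball.glue[OF P(1) face124 fresh] .
  have "(3::nat) \<in> {1, 3, 4}" "(3::nat) \<notin> {1, 2, 4}" by simp_all
  then have "{1, 3, 4} \<in> boundary_complex ?P - {{1, 2, 4}}" using face134 by blast
  then have "{1, 3, 4} \<in> boundary_complex (insert {n - 2, 1, 2, 4} ?P)"
    unfolding boundary_complex_glue[OF face124 fresh] by blast
  moreover have "n - 1 \<notin> \<Union>(insert {n - 2, 1, 2, 4} ?P)" using P(2) n by auto
  ultimately show ?thesis
    unfolding capped_path_ball_def using stacked_ball.glue[OF B2] by simp
qed

lemma capped_path_ball_tetrahedron:
  assumes "8 \<le> n" "i \<le> 2"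
  shows "{i..i + 3} \<in> capped_path_ball n"
proof -
  have "{i..i + 3} \<in> path_ball (n - 2)" unfolding path_ball_mem using assms by (intro exI[of _ i]) simp
  then show ?thesis unfolding capped_path_ball_def by (intro insertI2)
qed

lemma capped_path_ball_covers_faces:
  assumes n: "8 \<le> n" and s: "s \<subseteq> {1, 2, 3, 4}" "card s = 3"
  shows "\<exists>T\<in>capped_path_ball n. T \<noteq> {1, 2, 3, 4} \<and> s \<subseteq> T"
proof -
  let ?W = "{1, 2, 3, 4} :: nat set"
  have "\<not> ?W \<subseteq> s"
  proof
    assume "?W \<subseteq> s"
    then have "card ?W \<le> card s" using s(2) by (intro card_mono) (simp_all add: card_ge_0_finite)
    with s(2) show False by simp
  qed
  then obtain z where z: "z \<in> ?W" "z \<notin> s" by blast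
  then have s_sub: "s \<subseteq> ?W - {z}" using s(1) by blast
  from z(1) consider "z = 1" | "z = 2" | "z = 3" | "z = 4" by blast
  then show ?thesis
  proof cases
    case 1
    have "(5::nat) \<in> {2..2 + 3}" "(5::nat) \<notin> ?W" by simp_all
    then have "{2..2 + 3} \<noteq> ?W" by metis
    moreover have "s \<subseteq> {2..2 + 3}" using s_sub 1 by auto
    ultimately show ?thesis using capped_path_ball_tetrahedron[OF n, of 2]
      by (intro bexI[of _ "{2..2 + 3}"]) simp_all
  next
    case 2
    have "n - 1 \<in> {n - 1, 1, 3, 4}" "n - 1 \<notin> ?W" using n by auto
    then have "{n - 1, 1, 3, 4} \<noteq> ?W" by metis
    moreover have "s \<subseteq> {n - 1, 1, 3, 4}" using s_sub 2 by auto
    ultimately show ?thesis unfolding capped_path_ball_def by (intro bexI[of _ "{n - 1, 1, 3, 4}"]) simp_all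
  next
    case 3
    have "n - 2 \<in> {n - 2, 1, 2, 4}" "n - 2 \<notin> ?W" using n by auto
    then have "{n - 2, 1, 2, 4} \<noteq> ?W" by metis
    moreover have "s \<subseteq> {n - 2, 1, 2, 4}" using s_sub 3 by auto
    ultimately show ?thesis unfolding capped_path_ball_def by (intro bexI[of _ "{n - 2, 1, 2, 4}"]) simp_all
  next
    case 4
    have "(0::nat) \<in> {0..0 + 3}" "(0::nat) \<notin> ?W" by simp_all
    then have "{0..0 + 3} \<noteq> ?W" by metis
    moreover have "s \<subseteq> {0..0 + 3}" using s_sub 4 by auto
    ultimately show ?thesis using capped_path_ball_tetrahedron[OF n, of 0]
      by (intro bexI[of _ "{0..0 + 3}"]) simp_all
  qed
qed

lemma capped_path_ball_faceless_K4:
  assumes n: "8 \<le> n"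
  shows "has_faceless_K4 (boundary_complex (capped_path_ball n))"
proof -
  have "{1..1 + 3} \<in> capped_path_ball n" by (rule capped_path_ball_tetrahedron[OF n]) simp
  moreover have "{1..1 + 3} = {1, 2, 3, 4 :: nat}" by auto
  ultimately have W: "{1, 2, 3, 4} \<in> capped_path_ball n" by (simp only:)
  show ?thesis
    by (rule interior_facet_faceless_K4[OF stacked_ball_capped_path_ball[OF n] W
          capped_path_ball_covers_faces[OF n]])
qed

lemma pachner_adj_has_faceless_K4_iff:
  assumes "pachner_adj n K L"
  shows "has_faceless_K4 K \<longleftrightarrow> has_faceless_K4 L"
proof -
  obtain K' L' where K: "stacked_sphere K" "complex_iso K K'" and L: "stacked_sphere L" "complex_iso L L'"
    and flip: "edge_flip K' L'"
    using assms unfolding pachner_adj_def by blast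
  have K': "stacked_sphere K'" using stacked_sphere_complex_iso[OF K(1) complex_iso_sym[OF K(2)]] .
  have L': "stacked_sphere L'" using stacked_sphere_complex_iso[OF L(1) complex_iso_sym[OF L(2)]] .
  have "has_faceless_K4 K' \<longleftrightarrow> has_faceless_K4 L'"
    using has_faceless_K4_edge_flip[OF stacked_sphere_K5_free[OF K'] 
        stacked_sphere_edges_in_at_most_two_facets[OF K'] stacked_sphere_four_cycles_chorded[OF L'] flip]
      has_faceless_K4_edge_flip[OF stacked_sphere_K5_free[OF L']
        stacked_sphere_edges_in_at_most_two_facets[OF L'] stacked_sphere_four_cycles_chorded[OF K']
        edge_flip_converse[OF stacked_sphere_edges_in_at_most_two_facets[OF K'] flip]]
    by blast
  moreover have "has_faceless_K4 K \<longleftrightarrow> has_faceless_K4 K'"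
    using has_faceless_K4_complex_iso K(2) complex_iso_sym[OF K(2)] by blast
  moreover have "has_faceless_K4 L \<longleftrightarrow> has_faceless_K4 L'"
    using has_faceless_K4_complex_iso L(2) complex_iso_sym[OF L(2)] by blast
  ultimately show ?thesis by blast
qed

lemma pachner_path_has_faceless_K4_iff:
  "(symclp (pachner_adj n))\<^sup>*\<^sup>* K L \<Longrightarrow> has_faceless_K4 K \<longleftrightarrow> has_faceless_K4 L"
proof (induction rule: rtranclp_induct)
  case (step L M)
  then show ?case using pachner_adj_has_faceless_K4_iff unfolding symclp_def by blast
qed simp

theorem corollary4p6:
  fixes n :: nat
  assumes "n \<ge> 8"
  shows "\<not> pachner_graph_connected n"
proof
  assume connected: "pachner_graph_connected n"
  let ?K = "boundary_complex (capped_path_ball n)" and ?L = "boundary_complex (path_ball n)"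
  have balls: "stacked_ball (capped_path_ball n)" "stacked_ball (path_ball n)"
    using assms by (simp_all add: stacked_ball_capped_path_ball stacked_ball_path_ball)
  have "num_vertices ?K = n" "num_vertices ?L = n"
    unfolding num_vertices_def stacked_ball_boundary_vertices[OF balls(1)]
      stacked_ball_boundary_vertices[OF balls(2)]
    using assms by (simp_all add: capped_path_ball_vertices path_ball_vertices)
  then have "(symclp (pachner_adj n))\<^sup>*\<^sup>* ?K ?L"
    using connected stacked_sphere_boundary[OF balls(1)] stacked_sphere_boundary[OF balls(2)]
    unfolding pachner_graph_connected_def by blast
  then show False
    using pachner_path_has_faceless_K4_iff capped_path_ball_faceless_K4[OF assms]
      path_ball_no_faceless_K4 assms by simp
qed

end
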